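(* Fix $q\in[0,1)$. There is a constant $C>0$ depending only on $q$ such that the following holds. Let $N\in\mathbb N$, $k\in\llbracket0,N\rrbracket$, $a\in\mathbb N$, $b\in\mathbb R$, $t\ge0$, and let $X$ be an integer sufficiently large depending on $N,k,a,b$. Let $\dot\zeta_0$ be the random bijection of $\llbracket -X,X\rrbracket$ that is the identity on $\llbracket k+1,X\rrbracket$ and whose restriction to $\llbracket -X,k\rrbracket$ has the Mallows law $\mathcal M_{-X,k}$, and let $(\dot\zeta_t)_{t\ge0}$ be the multi-species ASEP on $\llbracket -X,X\rrbracket$ started from $\dot\zeta_0$. Write $\dot\zeta^i_t(x)=\mathbb 1[\dot\zeta_t(x)\le i]$. Let $\dot{\mathcal E}$ be the event that $h'\{\dot\zeta^k_t\}(N-k)>N-k+b$ and $h\{\dot\zeta^{-X+k-1}_t\}(N-k+a)<N-k+a$. Then $\mathbb P[\dot{\mathcal E}]\le Cq^{b/4-a/2}$.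
   Context: $\llbracket x,y\rrbracket$ is the set of integers in $[x,y]$. For integers $m\le n$, $\mathcal M_{m,n}$ is the Mallows measure on bijections $w$ of $\llbracket m,n\rrbracket$: $\mathcal M_{m,n}(w)\propto q^{\#\{m\le i<j\le n:\,w(i)<w(j)\}}$. The multi-species ASEP on $\llbracket -X,X\rrbracket$: state a bijection $\sigma$ of $\llbracket -X,X\rrbracket$; each nearest-neighbour pair $x,x+1$ in the interval independently swaps its values at rate $1$ if $\sigma(x)<\sigma(x+1)$ and at rate $q$ otherwise. Height functions: for $\omega:\llbracket m,n\rrbracket\to\{0,1\}$, $h\{\omega\}:\mathbb Z\to\mathbb Z$ is defined by extending $\omega$ by $0$ on $x<m$ and $1$ on $x>n$, setting $h\{\omega\}(x)=x$ for $x<m$ and $h\{\omega\}(x)-h\{\omega\}(x-1)=1-2\omega(x)$; $h'\{\omega\}$ is defined the same way but extending $\omega$ by $1$ on all of $\mathbb Z\setminus\llbracket m,n\rrbracket$ (so $h'\{\omega\}(x)=-x$ for $x<m$). *)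

theory Defs
  imports Complex_Main
begin

definition perms_on :: "int \<Rightarrow> int \<Rightarrow> (int \<Rightarrow> int) set" where
  "perms_on m n = {\<sigma>. bij_betw \<sigma> {m..n} {m..n} \<and> (\<forall>x. x \<notin> {m..n} \<longrightarrow> \<sigma> x = x)}"

definition mallows_weight :: "real \<Rightarrow> int \<Rightarrow> int \<Rightarrow> (int \<Rightarrow> int) \<Rightarrow> real" where
  "mallows_weight q m n \<sigma> = q ^ card {(i, j). m \<le> i \<and> i < j \<and> j \<le> n \<and> \<sigma> i < \<sigma> j}"

definition mallows :: "real \<Rightarrow> int \<Rightarrow> int \<Rightarrow> (int \<Rightarrow> int) \<Rightarrow> real" where
  "mallows q m n \<sigma> =
     (if \<sigma> \<in> perms_on m n
      then mallows_weight q m n \<sigma> / (\<Sum>\<tau>\<in>perms_on m n. mallows_weight q m n \<tau>)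
      else 0)"

definition swap_at :: "(int \<Rightarrow> int) \<Rightarrow> int \<Rightarrow> int \<Rightarrow> int" where
  "swap_at \<sigma> x = (\<lambda>y. if y = x then \<sigma> (x + 1) else if y = x + 1 then \<sigma> x else \<sigma> y)"

definition asep_rate :: "real \<Rightarrow> int \<Rightarrow> (int \<Rightarrow> int) \<Rightarrow> (int \<Rightarrow> int) \<Rightarrow> real" where
  "asep_rate q X \<sigma> \<tau> =
     (\<Sum>x\<in>{-X..<X}. if \<tau> = swap_at \<sigma> x then (if \<sigma> x < \<sigma> (x + 1) then 1 else q) else 0)"

definition asep_gen :: "real \<Rightarrow> int \<Rightarrow> (int \<Rightarrow> int) \<Rightarrow> (int \<Rightarrow> int) \<Rightarrow> real" where
  "asep_gen q X \<sigma> \<tau> =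
     asep_rate q X \<sigma> \<tau> - (if \<sigma> = \<tau> then (\<Sum>\<rho>\<in>perms_on (-X) X. asep_rate q X \<sigma> \<rho>) else 0)"

fun asep_gen_pow :: "real \<Rightarrow> int \<Rightarrow> nat \<Rightarrow> (int \<Rightarrow> int) \<Rightarrow> (int \<Rightarrow> int) \<Rightarrow> real" where
  "asep_gen_pow q X 0 \<sigma> \<tau> = (if \<sigma> = \<tau> then 1 else 0)"
| "asep_gen_pow q X (Suc n) \<sigma> \<tau> =
     (\<Sum>\<rho>\<in>perms_on (-X) X. asep_gen_pow q X n \<sigma> \<rho> * asep_gen q X \<rho> \<tau>)"

definition asep_trans :: "real \<Rightarrow> int \<Rightarrow> real \<Rightarrow> (int \<Rightarrow> int) \<Rightarrow> (int \<Rightarrow> int) \<Rightarrow> real" where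
  "asep_trans q X t \<sigma> \<tau> = (\<Sum>n. t ^ n / fact n * asep_gen_pow q X n \<sigma> \<tau>)"

text \<open>Probability that the ASEP at time t, started from the state that is the identity on
  [k+1,X] and Mallows M_{-X,k} on [-X,k], lies in the event E.\<close>
definition asep_prob_dot :: "real \<Rightarrow> int \<Rightarrow> int \<Rightarrow> real \<Rightarrow> ((int \<Rightarrow> int) \<Rightarrow> bool) \<Rightarrow> real" where
  "asep_prob_dot q X k t E =
     (\<Sum>\<sigma>\<in>perms_on (-X) X. \<Sum>\<tau>\<in>{\<tau>\<in>perms_on (-X) X. E \<tau>}.
        mallows q (-X) k \<sigma> * asep_trans q X t \<sigma> \<tau>)"

definition cut :: "int \<Rightarrow> (int \<Rightarrow> int) \<Rightarrow> int \<Rightarrow> int" where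
  "cut i \<zeta> = (\<lambda>x. if \<zeta> x \<le> i then 1 else 0)"

definition height :: "int \<Rightarrow> int \<Rightarrow> (int \<Rightarrow> int) \<Rightarrow> int \<Rightarrow> int" where
  "height m n \<omega> x =
     (if x < m then x
      else (m - 1) + (\<Sum>y\<in>{m..x}. 1 - 2 * (if y > n then 1 else \<omega> y)))"

definition height' :: "int \<Rightarrow> int \<Rightarrow> (int \<Rightarrow> int) \<Rightarrow> int \<Rightarrow> int" where
  "height' m n \<omega> x =
     (if x < m then - x
      else - (m - 1) + (\<Sum>y\<in>{m..x}. 1 - 2 * (if y > n then 1 else \<omega> y)))"

end

theory Submission
  imports Defs "HOL-Combinatorics.Permutations"
begin

(*
  Merge all species \<le> k of the ASEP into a single class.  Started from the state that is
  Mallows on [-X, k] and the identity on [k+1, X], the law at any time t has the form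
  F (merged configuration) * q ^ (number of low ascents): the initial law has this form, and
  the generator preserves it, since a swap of two adjacent low species satisfies detailed
  balance for the Mallows weight, while every other swap only moves the merged configuration.
  Hence the event may be estimated inside each fiber of the merging map, under the weight
  q ^ (number of low ascents).

  In a fiber the positions of the low species are fixed; say m of them lie to the right of
  N - k + a, where the first height condition forces m > k + b/2 - a.  The second height
  condition puts some label l = -X + i with i < k at a position \<le> N - k + a, and since at
  most i labels are below l, at least m - i larger low labels lie to its right.  Moving l to
  the nearest of them is injective and removes exactly one low ascent, so these
  configurations have weight at most q ^ (m - i) times that of the fiber.  Summing over
  i < k gives q ^ (b/4 - a/2) / (1 - q).
*)

section \<open>Exponentials of generator matrices\<close>

fun mat_pow :: "'a set \<Rightarrow> ('a \<Rightarrow> 'a \<Rightarrow> real) \<Rightarrow> nat \<Rightarrow> 'a \<Rightarrow> 'a \<Rightarrow> real" where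
  "mat_pow S Q 0 x y = (if x = y then 1 else 0)"
| "mat_pow S Q (Suc n) x y = (\<Sum>z\<in>S. mat_pow S Q n x z * Q z y)"

definition mat_exp :: "'a set \<Rightarrow> ('a \<Rightarrow> 'a \<Rightarrow> real) \<Rightarrow> real \<Rightarrow> 'a \<Rightarrow> 'a \<Rightarrow> real" where
  "mat_exp S Q t x y = (\<Sum>n. t ^ n / fact n * mat_pow S Q n x y)"

lemma exp_series_sums: "(\<lambda>n. (y::real) ^ n / fact n) sums exp y"
  using exp_converges[of y] by (simp add: divide_inverse_commute)

lemma mat_pow_abs_le:
  assumes "\<And>z y. z \<in> S \<Longrightarrow> y \<in> S \<Longrightarrow> \<bar>Q z y\<bar> \<le> K" and "0 \<le> K" and "y \<in> S"
  shows "\<bar>mat_pow S Q n x y\<bar> \<le> (real (card S) * K) ^ n"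
  using assms(3)
proof (induction n arbitrary: y)
  case 0
  then show ?case by simp
next
  case (Suc n)
  have "\<bar>mat_pow S Q (Suc n) x y\<bar> \<le> (\<Sum>z\<in>S. \<bar>mat_pow S Q n x z\<bar> * \<bar>Q z y\<bar>)"
    by (simp add: abs_mult [symmetric] sum_abs)
  also have "\<dots> \<le> (\<Sum>z\<in>S. (real (card S) * K) ^ n * K)"
    by (intro sum_mono mult_mono Suc.IH assms) (use Suc.prems assms in auto)
  also have "\<dots> = (real (card S) * K) ^ Suc n"
    by simp
  finally show ?case .
qed

lemma summable_norm_mat_exp_series:
  assumes "finite S" and "y \<in> S"
  shows "summable (\<lambda>n. norm (t ^ n / fact n * mat_pow S Q n x y))"
proof -
  define K where "K = (\<Sum>z\<in>S. \<Sum>y\<in>S. \<bar>Q z y\<bar>)"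
  define M where "M = real (card S) * K"
  have "\<bar>Q z y'\<bar> \<le> K" if "z \<in> S" "y' \<in> S" for z y'
    unfolding K_def using assms(1) that
    by (intro order.trans[OF member_le_sum[of y'] member_le_sum[of z]] sum_nonneg) auto
  then have "\<bar>mat_pow S Q n x y\<bar> \<le> M ^ n" for n
    unfolding M_def using mat_pow_abs_le[of S Q K y n x] assms(2) by (simp add: K_def sum_nonneg)
  then have "norm (t ^ n / fact n * mat_pow S Q n x y) \<le> (\<bar>t\<bar> * M) ^ n / fact n" for n
    by (auto simp: abs_mult power_abs power_mult_distrib intro!: mult_left_mono divide_right_mono)
  then show ?thesis
    by (intro summable_comparison_test[OF _ sums_summable[OF exp_series_sums]]) auto
qed

lemma summable_mat_exp_series:
  "finite S \<Longrightarrow> y \<in> S \<Longrightarrow> summable (\<lambda>n. t ^ n / fact n * mat_pow S Q n x y)"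
  by (rule summable_norm_cancel[OF summable_norm_mat_exp_series])

lemma mat_pow_row_sum:
  assumes "finite S" and "\<And>z. z \<in> S \<Longrightarrow> (\<Sum>y\<in>S. Q z y) = 0" and "x \<in> S"
  shows "(\<Sum>y\<in>S. mat_pow S Q n x y) = (if n = 0 then 1 else 0)"
proof (cases n)
  case 0
  then show ?thesis using assms by simp
next
  case (Suc m)
  have "(\<Sum>y\<in>S. mat_pow S Q (Suc m) x y) = (\<Sum>z\<in>S. mat_pow S Q m x z * (\<Sum>y\<in>S. Q z y))"
    by (simp add: sum_distrib_left) (rule sum.swap)
  also have "\<dots> = 0"
    using assms(2) by simp
  finally show ?thesis using Suc by simp
qed

lemma mat_exp_row_sum:
  assumes "finite S" and "\<And>z. z \<in> S \<Longrightarrow> (\<Sum>y\<in>S. Q z y) = 0" and "x \<in> S"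
  shows "(\<Sum>y\<in>S. mat_exp S Q t x y) = 1"
proof -
  have "(\<Sum>y\<in>S. mat_exp S Q t x y) = (\<Sum>n. \<Sum>y\<in>S. t ^ n / fact n * mat_pow S Q n x y)"
    unfolding mat_exp_def using assms(1) by (intro suminf_sum [symmetric] summable_mat_exp_series)
  also have "\<dots> = (\<Sum>n. t ^ n / fact n * (if n = 0 then 1 else 0))"
    by (simp only: sum_distrib_left [symmetric] mat_pow_row_sum[OF assms])
  also have "(\<lambda>n. t ^ n / fact n * (if n = 0 then 1 else 0)) = (\<lambda>n. if n = 0 then 1 else 0)"
    by auto
  also have "(\<Sum>n. if n = 0 then 1 else 0) = (1::real)"
    using sums_single[of 0 "\<lambda>_. 1::real"] by (simp add: sums_iff)
  finally show ?thesis .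
qed

lemma binomial_convolution_Suc:
  fixes g :: "nat \<Rightarrow> real"
  shows "(\<Sum>i\<le>n. real (n choose i) * c ^ i * g (Suc n - i)) +
         (\<Sum>i\<le>n. real (n choose i) * c ^ Suc i * g (n - i)) =
         (\<Sum>i\<le>Suc n. real (Suc n choose i) * c ^ i * g (Suc n - i))"
proof -
  have rhs: "(\<Sum>i\<le>Suc n. real (Suc n choose i) * c ^ i * g (Suc n - i)) =
      g (Suc n) + (\<Sum>i\<le>n. real (n choose i) * c ^ Suc i * g (n - i))
        + (\<Sum>i\<le>n. real (n choose Suc i) * c ^ Suc i * g (n - i))"
    by (subst sum.atMost_Suc_shift) (simp add: ring_distribs sum.distrib)
  have "(\<Sum>i\<le>n. real (n choose i) * c ^ i * g (Suc n - i)) =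
      (\<Sum>i\<le>Suc n. real (n choose i) * c ^ i * g (Suc n - i))"
    by simp
  also have "\<dots> = g (Suc n) + (\<Sum>i\<le>n. real (n choose Suc i) * c ^ Suc i * g (n - i))"
    by (subst sum.atMost_Suc_shift) simp
  finally show ?thesis
    using rhs by simp
qed

lemma mat_pow_add_diagonal:
  assumes "finite S" and "y \<in> S"
  shows "mat_pow S (\<lambda>z y. Q z y + (if z = y then c else 0)) n x y =
    (\<Sum>i\<le>n. real (n choose i) * c ^ i * mat_pow S Q (n - i) x y)"
  using assms(2)
proof (induction n arbitrary: y)
  case 0
  then show ?case by simp
next
  case (Suc n)
  let ?B = "\<lambda>z y. Q z y + (if z = y then c else 0)"
  let ?g = "\<lambda>j. mat_pow S Q j x y"
  have "mat_pow S ?B (Suc n) x y =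
      (\<Sum>z\<in>S. mat_pow S ?B n x z * Q z y) + (\<Sum>z\<in>S. if z = y then mat_pow S ?B n x z * c else 0)"
    unfolding mat_pow.simps sum.distrib [symmetric] by (rule sum.cong [OF refl]) (simp add: ring_distribs)
  also have "(\<Sum>z\<in>S. if z = y then mat_pow S ?B n x z * c else 0) = c * mat_pow S ?B n x y"
    using assms(1) Suc.prems by (simp add: sum.delta' mult.commute)
  also have "(\<Sum>z\<in>S. mat_pow S ?B n x z * Q z y) =
      (\<Sum>i\<le>n. real (n choose i) * c ^ i * (\<Sum>z\<in>S. mat_pow S Q (n - i) x z * Q z y))"
    by (simp add: Suc.IH sum_distrib_left sum_distrib_right mult.assoc cong: sum.cong)
      (rule sum.swap)
  also have "\<dots> = (\<Sum>i\<le>n. real (n choose i) * c ^ i * ?g (Suc n - i))"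
    by (intro sum.cong refl) (simp add: Suc_diff_le)
  also have "c * mat_pow S ?B n x y = (\<Sum>i\<le>n. real (n choose i) * c ^ Suc i * ?g (n - i))"
    by (simp add: Suc.IH[OF Suc.prems] sum_distrib_left mult_ac)
  finally show ?case
    using binomial_convolution_Suc[of n c ?g] by simp
qed

lemma mat_exp_add_diagonal:
  assumes "finite S" and "y \<in> S"
  shows "mat_exp S (\<lambda>z y. Q z y + (if z = y then c else 0)) t x y = exp (c * t) * mat_exp S Q t x y"
proof -
  define a where "a = (\<lambda>i. (c * t) ^ i / fact i)"
  define b where "b = (\<lambda>j. t ^ j / fact j * mat_pow S Q j x y)"
  have "summable (\<lambda>i. norm (a i))"
    using sums_summable[OF exp_series_sums[of "\<bar>c * t\<bar>"]] by (simp add: a_def power_abs)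
  moreover have "summable (\<lambda>j. norm (b j))"
    unfolding b_def using assms by (rule summable_norm_mat_exp_series)
  ultimately have "(\<lambda>n. \<Sum>i\<le>n. a i * b (n - i)) sums (suminf a * suminf b)"
    by (rule Cauchy_product_sums)
  moreover have "suminf a = exp (c * t)"
    unfolding a_def by (rule sums_unique [symmetric, OF exp_series_sums])
  moreover have "(\<Sum>i\<le>n. a i * b (n - i)) =
      t ^ n / fact n * mat_pow S (\<lambda>z y. Q z y + (if z = y then c else 0)) n x y" for n
  proof -
    have "a i * b (n - i) = t ^ n / fact n * (real (n choose i) * c ^ i * mat_pow S Q (n - i) x y)"
      if "i \<le> n" for i
    proof -
      have "t ^ n = t ^ i * t ^ (n - i)"
        using that by (simp add: power_add [symmetric])
      then show ?thesis
        using that by (simp add: a_def b_def binomial_fact power_mult_distrib field_simps)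
    qed
    then show ?thesis
      by (simp add: mat_pow_add_diagonal[OF assms] sum_distrib_left)
  qed
  ultimately show ?thesis
    by (simp add: mat_exp_def b_def sums_iff)
qed

lemma mat_pow_nonneg:
  assumes "\<And>z y. z \<in> S \<Longrightarrow> y \<in> S \<Longrightarrow> 0 \<le> B z y" and "y \<in> S"
  shows "0 \<le> mat_pow S B n x y"
  using assms(2) by (induction n arbitrary: y) (auto intro!: sum_nonneg mult_nonneg_nonneg assms(1))

text \<open>Uniformisation: adding a large enough multiple of the identity makes the generator
  nonnegative, and only rescales its exponential by a positive factor.\<close>
lemma mat_exp_nonneg:
  assumes "finite S" and offdiag: "\<And>z y. z \<in> S \<Longrightarrow> y \<in> S \<Longrightarrow> z \<noteq> y \<Longrightarrow> 0 \<le> Q z y"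
    and "0 \<le> t" and "y \<in> S"
  shows "0 \<le> mat_exp S Q t x y"
proof -
  define c where "c = (\<Sum>z\<in>S. \<bar>Q z z\<bar>)"
  have "\<bar>Q z z\<bar> \<le> c" if "z \<in> S" for z
    unfolding c_def using assms(1) that by (intro member_le_sum) auto
  then have "0 \<le> Q z y + (if z = y then c else 0)" if "z \<in> S" "y \<in> S" for z y
    using offdiag[OF that] that by (cases "z = y") force+
  then have "0 \<le> mat_exp S (\<lambda>z y. Q z y + (if z = y then c else 0)) t x y"
    unfolding mat_exp_def using assms(1,3,4)
    by (intro suminf_nonneg summable_mat_exp_series mult_nonneg_nonneg mat_pow_nonneg) auto
  then show ?thesis
    unfolding mat_exp_add_diagonal[OF assms(1,4)] by (simp add: zero_le_mult_iff)
qed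

lemma sum_mult_mat_pow_Suc:
  "(\<Sum>x\<in>S. \<mu> x * mat_pow S Q (Suc n) x y) = (\<Sum>z\<in>S. (\<Sum>x\<in>S. \<mu> x * mat_pow S Q n x z) * Q z y)"
  by (simp add: sum_distrib_left sum_distrib_right mult.assoc) (rule sum.swap)

lemma sums_sum_mult_mat_exp:
  assumes "finite S" and "y \<in> S"
  shows "(\<lambda>n. t ^ n / fact n * (\<Sum>x\<in>S. \<mu> x * mat_pow S Q n x y)) sums
    (\<Sum>x\<in>S. \<mu> x * mat_exp S Q t x y)"
proof -
  have "(\<lambda>n. \<Sum>x\<in>S. \<mu> x * (t ^ n / fact n * mat_pow S Q n x y)) sums (\<Sum>x\<in>S. \<mu> x * mat_exp S Q t x y)"
    unfolding mat_exp_def using assms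
    by (intro sums_sum sums_mult summable_sums summable_mat_exp_series)
  then show ?thesis
    by (simp add: sum_distrib_left mult_ac)
qed

section \<open>The multi-species ASEP generator\<close>

lemma perms_on_iff_permutes: "\<sigma> \<in> perms_on m n \<longleftrightarrow> \<sigma> permutes {m..n}"
  unfolding perms_on_def by (auto intro: bij_imp_permutes permutes_imp_bij permutes_not_in)

lemma finite_perms_on: "finite (perms_on m n)"
proof -
  have "perms_on m n = {\<sigma>. \<sigma> permutes {m..n}}"
    by (auto simp: perms_on_iff_permutes)
  then show ?thesis
    by (simp add: finite_permutations)
qed

lemma swap_at_eq_comp_transpose: "swap_at \<sigma> x = \<sigma> \<circ> transpose x (x + 1)"
  by (auto simp: swap_at_def transpose_def)

lemma swap_at_swap_at [simp]: "swap_at (swap_at \<sigma> x) x = \<sigma>"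
  by (auto simp: swap_at_def)

lemma swap_at_in_perms_on:
  "\<sigma> \<in> perms_on m n \<Longrightarrow> m \<le> x \<Longrightarrow> x < n \<Longrightarrow> swap_at \<sigma> x \<in> perms_on m n"
  by (simp add: perms_on_iff_permutes swap_at_eq_comp_transpose permutes_compose permutes_swap_id)

definition jump_rate :: "real \<Rightarrow> (int \<Rightarrow> int) \<Rightarrow> int \<Rightarrow> real" where
  "jump_rate q \<sigma> x = (if \<sigma> x < \<sigma> (x + 1) then 1 else q)"

lemma asep_gen_pow_eq_mat_pow: "asep_gen_pow q X n = mat_pow (perms_on (-X) X) (asep_gen q X) n"
  by (induction n) (auto intro!: ext)

locale asep =
  fixes q :: real and X :: int
  assumes q_nonneg: "0 \<le> q"
begin

abbreviation S :: "(int \<Rightarrow> int) set" where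
  "S \<equiv> perms_on (-X) X"

lemma asep_exit_rate:
  assumes "\<sigma> \<in> S"
  shows "(\<Sum>\<rho>\<in>S. asep_rate q X \<sigma> \<rho>) = (\<Sum>x\<in>{-X..<X}. jump_rate q \<sigma> x)"
proof -
  have "(\<Sum>\<rho>\<in>S. asep_rate q X \<sigma> \<rho>) =
      (\<Sum>x\<in>{-X..<X}. \<Sum>\<rho>\<in>S. if \<rho> = swap_at \<sigma> x then jump_rate q \<sigma> x else 0)"
    unfolding asep_rate_def jump_rate_def by (rule sum.swap)
  also have "\<dots> = (\<Sum>x\<in>{-X..<X}. jump_rate q \<sigma> x)"
    using assms finite_perms_on by (intro sum.cong refl) (simp add: swap_at_in_perms_on)
  finally show ?thesis .
qed

lemma asep_gen_row_sum: "\<sigma> \<in> S \<Longrightarrow> (\<Sum>\<tau>\<in>S. asep_gen q X \<sigma> \<tau>) = 0"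
  unfolding asep_gen_def using finite_perms_on by (simp add: sum_subtractf)

lemma asep_gen_offdiag_nonneg: "\<sigma> \<noteq> \<tau> \<Longrightarrow> 0 \<le> asep_gen q X \<sigma> \<tau>"
  unfolding asep_gen_def asep_rate_def using q_nonneg by (auto intro!: sum_nonneg)

lemma asep_trans_eq_mat_exp: "asep_trans q X t = mat_exp S (asep_gen q X) t"
  by (intro ext) (simp add: asep_trans_def mat_exp_def asep_gen_pow_eq_mat_pow)

lemma asep_trans_row_sum: "\<sigma> \<in> S \<Longrightarrow> (\<Sum>\<tau>\<in>S. asep_trans q X t \<sigma> \<tau>) = 1"
  unfolding asep_trans_eq_mat_exp by (intro mat_exp_row_sum finite_perms_on asep_gen_row_sum)

lemma asep_trans_nonneg: "0 \<le> t \<Longrightarrow> \<tau> \<in> S \<Longrightarrow> 0 \<le> asep_trans q X t \<sigma> \<tau>"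
  unfolding asep_trans_eq_mat_exp by (intro mat_exp_nonneg finite_perms_on asep_gen_offdiag_nonneg)

lemma asep_gen_left_action:
  assumes "\<tau> \<in> S"
  shows "(\<Sum>\<rho>\<in>S. v \<rho> * asep_gen q X \<rho> \<tau>) =
    (\<Sum>x\<in>{-X..<X}. v (swap_at \<tau> x) * jump_rate q (swap_at \<tau> x) x - v \<tau> * jump_rate q \<tau> x)"
proof -
  have "(\<Sum>\<rho>\<in>S. v \<rho> * asep_rate q X \<rho> \<tau>) =
      (\<Sum>\<rho>\<in>S. \<Sum>x\<in>{-X..<X}. if \<rho> = swap_at \<tau> x then v \<rho> * jump_rate q \<rho> x else 0)"
    unfolding asep_rate_def jump_rate_def sum_distrib_left
    by (intro sum.cong refl) (auto dest: sym)
  also have "\<dots> = (\<Sum>x\<in>{-X..<X}. v (swap_at \<tau> x) * jump_rate q (swap_at \<tau> x) x)"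
    using assms finite_perms_on by (subst sum.swap) (auto intro!: sum.cong simp: swap_at_in_perms_on)
  finally have "(\<Sum>\<rho>\<in>S. v \<rho> * asep_rate q X \<rho> \<tau>) = \<dots>" .
  moreover have "(\<Sum>\<rho>\<in>S. v \<rho> * asep_gen q X \<rho> \<tau>) = (\<Sum>\<rho>\<in>S. v \<rho> * asep_rate q X \<rho> \<tau>)
      - (\<Sum>\<rho>\<in>S. if \<rho> = \<tau> then v \<rho> * (\<Sum>\<rho>'\<in>S. asep_rate q X \<rho> \<rho>') else 0)"
    unfolding sum_subtractf [symmetric] by (intro sum.cong refl) (simp add: asep_gen_def ring_distribs)
  moreover have "(\<Sum>\<rho>\<in>S. if \<rho> = \<tau> then v \<rho> * (\<Sum>\<rho>'\<in>S. asep_rate q X \<rho> \<rho>') else 0) =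
      v \<tau> * (\<Sum>x\<in>{-X..<X}. jump_rate q \<tau> x)"
    using assms finite_perms_on by (simp add: sum.delta' asep_exit_rate)
  ultimately show ?thesis
    by (simp add: sum_subtractf sum_distrib_left)
qed

end

section \<open>Low ascents and the Mallows weight\<close>

definition merge_low :: "int \<Rightarrow> int \<Rightarrow> (int \<Rightarrow> int) \<Rightarrow> int \<Rightarrow> int" where
  "merge_low X k \<tau> = (\<lambda>x. if \<tau> x \<le> k then - X - 1 else \<tau> x)"

definition low_ascents :: "int \<Rightarrow> int \<Rightarrow> (int \<Rightarrow> int) \<Rightarrow> (int \<times> int) set" where
  "low_ascents X k \<tau> = {(i, j). - X \<le> i \<and> i < j \<and> j \<le> X \<and> \<tau> i < \<tau> j \<and> \<tau> j \<le> k}"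

definition low_weight :: "real \<Rightarrow> int \<Rightarrow> int \<Rightarrow> (int \<Rightarrow> int) \<Rightarrow> real" where
  "low_weight q X k \<tau> = q ^ card (low_ascents X k \<tau>)"

definition transpose_pair :: "int \<Rightarrow> int \<Rightarrow> int \<times> int \<Rightarrow> int \<times> int" where
  "transpose_pair p s = (\<lambda>(i, j).
     if (i = p \<and> p < j \<and> j < s) \<or> (j = s \<and> p < i \<and> i < s) then (i, j)
     else (transpose p s i, transpose p s j))"

lemma finite_low_ascents: "finite (low_ascents X k \<tau>)"
  by (rule finite_subset[of _ "{-X..X} \<times> {-X..X}"]) (auto simp: low_ascents_def)

lemma transpose_pair_involutive:
  "i < j \<Longrightarrow> p < s \<Longrightarrow> transpose_pair p s (transpose_pair p s (i, j)) = (i, j)"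
  by (auto simp: transpose_pair_def transpose_def)

lemma transpose_pair_low_ascents:
  assumes "p < s" "- X \<le> p" "s \<le> X"
    and between: "\<And>z. p < z \<Longrightarrow> z < s \<Longrightarrow>
       (\<tau> z < \<tau> p \<and> \<tau> z < \<tau> s \<and> \<tau> p \<le> k \<and> \<tau> s \<le> k) \<or> (\<tau> p < \<tau> z \<and> \<tau> s < \<tau> z)"
    and "a \<in> low_ascents X k (\<tau> \<circ> transpose p s) - {(p, s)}"
  shows "transpose_pair p s a \<in> low_ascents X k \<tau> - {(p, s)}"
proof -
  obtain i j where a: "a = (i, j)"
    by (cases a)
  have ij: "- X \<le> i" "i < j" "j \<le> X" "(i, j) \<noteq> (p, s)"
    and lt: "\<tau> (transpose p s i) < \<tau> (transpose p s j)" and low: "\<tau> (transpose p s j) \<le> k"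
    using assms(5) by (auto simp: a low_ascents_def)
  consider "i = p \<and> p < j \<and> j < s" | "j = s \<and> p < i \<and> i < s"
    | "\<not> (i = p \<and> p < j \<and> j < s)" "\<not> (j = s \<and> p < i \<and> i < s)"
    by blast
  then show ?thesis
  proof cases
    case 1
    then show ?thesis
      using lt low between[of j] ij by (auto simp: a transpose_pair_def low_ascents_def)
  next
    case 2
    then show ?thesis
      using lt low between[of i] ij by (auto simp: a transpose_pair_def low_ascents_def)
  next
    case 3
    then have "transpose p s i < transpose p s j"
      using ij \<open>p < s\<close> by (auto simp: transpose_def)
    moreover have "- X \<le> transpose p s i" "transpose p s j \<le> X" "(transpose p s i, transpose p s j) \<noteq> (p, s)"
      using ij assms(1-3) by (auto simp: transpose_def)
    ultimately show ?thesis
      using 3 lt low by (auto simp: a transpose_pair_def low_ascents_def)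
  qed
qed

lemma card_low_ascents_transpose:
  assumes "p < s" "- X \<le> p" "s \<le> X"
    and between: "\<And>z. p < z \<Longrightarrow> z < s \<Longrightarrow>
       (\<tau> z < \<tau> p \<and> \<tau> z < \<tau> s \<and> \<tau> p \<le> k \<and> \<tau> s \<le> k) \<or> (\<tau> p < \<tau> z \<and> \<tau> s < \<tau> z)"
  shows "card (low_ascents X k (\<tau> \<circ> transpose p s) - {(p, s)}) = card (low_ascents X k \<tau> - {(p, s)})"
proof (rule bij_betw_same_card [of "transpose_pair p s"], rule bij_betw_byWitness[where f' = "transpose_pair p s"])
  let ?\<tau>' = "\<tau> \<circ> transpose p s"
  have between': "(?\<tau>' z < ?\<tau>' p \<and> ?\<tau>' z < ?\<tau>' s \<and> ?\<tau>' p \<le> k \<and> ?\<tau>' s \<le> k) \<or> (?\<tau>' p < ?\<tau>' z \<and> ?\<tau>' s < ?\<tau>' z)"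
    if "p < z" "z < s" for z
  proof -
    have "transpose p s z = z"
      using that by (simp add: transpose_def)
    then show ?thesis
      using between[OF that] by (simp only: o_apply transpose_apply_first transpose_apply_second) blast
  qed
  show "\<forall>a\<in>low_ascents X k ?\<tau>' - {(p, s)}. transpose_pair p s (transpose_pair p s a) = a"
       "\<forall>a\<in>low_ascents X k \<tau> - {(p, s)}. transpose_pair p s (transpose_pair p s a) = a"
    using \<open>p < s\<close> by (clarsimp simp: low_ascents_def transpose_pair_involutive)+
  show "transpose_pair p s ` (low_ascents X k ?\<tau>' - {(p, s)}) \<subseteq> low_ascents X k \<tau> - {(p, s)}"
    by (rule image_subsetI) (rule transpose_pair_low_ascents[OF assms])
  show "transpose_pair p s ` (low_ascents X k \<tau> - {(p, s)}) \<subseteq> low_ascents X k ?\<tau>' - {(p, s)}"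
  proof (rule image_subsetI)
    fix a
    assume "a \<in> low_ascents X k \<tau> - {(p, s)}"
    then have a: "a \<in> low_ascents X k (?\<tau>' \<circ> transpose p s) - {(p, s)}"
      by (simp add: comp_assoc)
    show "transpose_pair p s a \<in> low_ascents X k ?\<tau>' - {(p, s)}"
      by (rule transpose_pair_low_ascents[where \<tau> = ?\<tau>', OF assms(1-3) _ a]) (rule between')
  qed
qed

lemma card_low_ascents_remove:
  "card (low_ascents X k \<tau>) = card (low_ascents X k \<tau> - {(p, s)}) +
     (if - X \<le> p \<and> p < s \<and> s \<le> X \<and> \<tau> p < \<tau> s \<and> \<tau> s \<le> k then 1 else 0)"
  using card_Suc_Diff1[OF finite_low_ascents, of "(p, s)" X k \<tau>] by (auto simp: low_ascents_def)

lemma card_low_ascents_swap_at: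
  assumes "- X \<le> x" "x < X" "\<not> (\<tau> x \<le> k \<and> \<tau> (x + 1) \<le> k)"
  shows "card (low_ascents X k (swap_at \<tau> x)) = card (low_ascents X k \<tau>)"
proof -
  have "card (low_ascents X k (\<tau> \<circ> transpose x (x + 1)) - {(x, x + 1)}) =
      card (low_ascents X k \<tau> - {(x, x + 1)})"
    by (rule card_low_ascents_transpose) (use assms in auto)
  moreover have "\<not> (swap_at \<tau> x x < swap_at \<tau> x (x + 1) \<and> swap_at \<tau> x (x + 1) \<le> k)"
    "\<not> (\<tau> x < \<tau> (x + 1) \<and> \<tau> (x + 1) \<le> k)"
    using assms(3) by (auto simp: swap_at_def)
  ultimately show ?thesis
    using card_low_ascents_remove[of X k "swap_at \<tau> x" x "x + 1"] card_low_ascents_remove[of X k \<tau> x "x + 1"]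
    by (simp add: swap_at_eq_comp_transpose)
qed

lemma low_weight_swap_at_balance:
  assumes "- X \<le> x" "x < X" "\<tau> x \<le> k" "\<tau> (x + 1) \<le> k" "\<tau> x \<noteq> \<tau> (x + 1)"
  shows "low_weight q X k (swap_at \<tau> x) * jump_rate q (swap_at \<tau> x) x = low_weight q X k \<tau> * jump_rate q \<tau> x"
proof -
  have "card (low_ascents X k (\<tau> \<circ> transpose x (x + 1)) - {(x, x + 1)}) =
      card (low_ascents X k \<tau> - {(x, x + 1)})"
    by (rule card_low_ascents_transpose) (use assms in auto)
  then have "card (low_ascents X k (swap_at \<tau> x)) =
        card (low_ascents X k \<tau> - {(x, x + 1)}) + (if \<tau> (x + 1) < \<tau> x then 1 else 0)"
      "card (low_ascents X k \<tau>) =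
        card (low_ascents X k \<tau> - {(x, x + 1)}) + (if \<tau> x < \<tau> (x + 1) then 1 else 0)"
    using card_low_ascents_remove[of X k "swap_at \<tau> x" x "x + 1"] card_low_ascents_remove[of X k \<tau> x "x + 1"] assms
    by (auto simp: swap_at_eq_comp_transpose)
  then show ?thesis
    using assms(5) by (cases "\<tau> x < \<tau> (x + 1)") (auto simp: low_weight_def jump_rate_def swap_at_def)
qed

lemma merge_low_swap_at: "merge_low X k (swap_at \<tau> x) = swap_at (merge_low X k \<tau>) x"
  by (rule ext) (simp add: merge_low_def swap_at_def)

lemma merge_low_swap_at_low: "\<tau> x \<le> k \<Longrightarrow> \<tau> (x + 1) \<le> k \<Longrightarrow> merge_low X k (swap_at \<tau> x) = merge_low X k \<tau>"
  by (rule ext) (simp add: merge_low_def swap_at_def)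

lemma merge_low_eq_iff: "- X - 1 \<le> k \<Longrightarrow> merge_low X k \<tau> y = - X - 1 \<longleftrightarrow> \<tau> y \<le> k"
  by (simp add: merge_low_def)

lemma jump_rate_merge_low:
  "- X - 1 \<le> k \<Longrightarrow> \<not> (\<tau> x \<le> k \<and> \<tau> (x + 1) \<le> k) \<Longrightarrow> jump_rate q (merge_low X k \<tau>) x = jump_rate q \<tau> x"
  by (auto simp: jump_rate_def merge_low_def)

lemma sum_le_sum_filter_cover:
  fixes w :: "'a \<Rightarrow> real"
  assumes "finite A" "finite I" and nonneg: "\<And>x. x \<in> A \<Longrightarrow> 0 \<le> w x"
    and cover: "\<And>x. x \<in> A \<Longrightarrow> \<exists>i\<in>I. P i x"
  shows "sum w A \<le> (\<Sum>i\<in>I. sum w {x\<in>A. P i x})"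
proof -
  have "sum w A \<le> (\<Sum>x\<in>A. \<Sum>i\<in>I. if P i x then w x else 0)"
  proof (rule sum_mono)
    fix x
    assume "x \<in> A"
    then obtain i where "i \<in> I" "P i x"
      using cover by blast
    then have "w x = (if P i x then w x else 0)"
      by simp
    also have "\<dots> \<le> (\<Sum>i\<in>I. if P i x then w x else 0)"
      by (rule member_le_sum[where f = "\<lambda>i. if P i x then w x else 0", OF \<open>i \<in> I\<close>]) (use nonneg \<open>x \<in> A\<close> assms(2) in auto)
    finally show "w x \<le> (\<Sum>i\<in>I. if P i x then w x else 0)" .
  qed
  also have "\<dots> = (\<Sum>i\<in>I. sum w {x\<in>A. P i x})"
    using assms(1) by (subst sum.swap) (simp add: sum.inter_filter)
  finally show ?thesis .
qed

lemma sum_power_diff_le: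
  fixes q :: real
  assumes "0 \<le> q" "q < 1" "K \<le> m"
  shows "(\<Sum>i<K. q ^ (m - i)) \<le> q ^ (m - K + 1) / (1 - q)"
proof -
  have "(\<Sum>i<K. q ^ (m - i)) = (\<Sum>i<K. q ^ (m - K + 1) * q ^ (K - Suc i))"
  proof (intro sum.cong refl)
    fix i
    assume "i \<in> {..<K}"
    then have "m - i = (m - K + 1) + (K - Suc i)"
      using assms(3) by auto
    then show "q ^ (m - i) = q ^ (m - K + 1) * q ^ (K - Suc i)"
      by (simp only: power_add)
  qed
  also have "\<dots> = q ^ (m - K + 1) * (\<Sum>i<K. q ^ (K - Suc i))"
    by (simp only: sum_distrib_left)
  also have "(\<Sum>i<K. q ^ (K - Suc i)) = (\<Sum>i<K. q ^ i)"
    by (rule sum.nat_diff_reindex)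
  also have "(\<Sum>i<K. q ^ i) = (1 - q ^ K) / (1 - q)"
    using assms(2) by (simp add: sum_gp_strict)
  also have "q ^ (m - K + 1) * ((1 - q ^ K) / (1 - q)) \<le> q ^ (m - K + 1) / (1 - q)"
    using assms(1,2) by (simp add: divide_right_mono mult_left_le)
  finally show ?thesis .
qed

lemma power_le_powr:
  fixes q e :: real
  assumes "0 \<le> q" "q \<le> 1" "0 < e" "e \<le> real n"
  shows "q ^ n \<le> q powr e"
proof (cases "q = 0")
  case True
  moreover have "0 < n"
    using assms(3,4) by auto
  ultimately show ?thesis
    by (simp add: zero_power)
next
  case False
  then have "q ^ n = q powr real n"
    using assms(1) by (simp add: powr_realpow)
  also have "\<dots> \<le> q powr e"
    using False assms by (intro powr_mono') auto
  finally show ?thesis .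
qed

lemma sum_power_diff_le_powr:
  fixes q e :: real
  assumes "0 \<le> q" "q < 1" "0 < e" "K \<le> m" "e \<le> real (m - K + 1)"
  shows "(\<Sum>i<K. q ^ (m - i)) \<le> q powr e / (1 - q)"
proof -
  have "(\<Sum>i<K. q ^ (m - i)) \<le> q ^ (m - K + 1) / (1 - q)"
    using assms(1,2,4) by (rule sum_power_diff_le)
  also have "\<dots> \<le> q powr e / (1 - q)"
    using assms by (intro divide_right_mono power_le_powr) simp_all
  finally show ?thesis .
qed

lemma powr_bound_cases:
  fixes q P e :: real
  assumes "0 \<le> q" "q < 1" and P: "P \<le> (if 0 < e then q powr e / (1 - q) else 1)"
  shows "if q = 0 then (0 < e \<longrightarrow> P \<le> 0) \<and> (e = 0 \<longrightarrow> P \<le> 1 / (1 - q)) else P \<le> 1 / (1 - q) * q powr e"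
proof (cases "q = 0")
  case True
  then show ?thesis
    using P by (auto split: if_splits)
next
  case False
  then have "0 < q"
    using assms(1) by simp
  have "1 \<le> q powr e" if "e \<le> 0"
  proof -
    have "q powr (- e) \<le> 1"
      using \<open>0 < q\<close> assms(2) that by (intro powr_le1) auto
    then show ?thesis
      using \<open>0 < q\<close> by (simp add: powr_minus inverse_le_1_iff)
  qed
  moreover have "1 \<le> 1 / (1 - q)"
    using assms(1,2) by simp
  ultimately have "1 * 1 \<le> 1 / (1 - q) * q powr e" if "e \<le> 0"
    using that assms(2) by (intro mult_mono) auto
  then show ?thesis
    using False P by (auto split: if_splits)
qed

lemma height'_cut:
  assumes "m \<le> x" "x \<le> n"
  shows "height' m n (cut k \<tau>) x = x - 2 * m + 2 - 2 * int (card {y\<in>{m..x}. \<tau> y \<le> k})"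
proof -
  have "(\<Sum>y\<in>{m..x}. 1 - 2 * (if y > n then 1 else cut k \<tau> y)) =
      (\<Sum>y\<in>{m..x}. 1 - 2 * (if \<tau> y \<le> k then 1 else 0 :: int))"
    using assms by (intro sum.cong refl) (auto simp: cut_def)
  also have "\<dots> = int (card {m..x}) - 2 * int (card {y\<in>{m..x}. \<tau> y \<le> k})"
    by (simp add: sum_subtractf sum_distrib_left [symmetric] sum.inter_filter [symmetric])
  finally show ?thesis
    using assms by (simp add: height'_def)
qed

lemma height_cut_less_imp:
  assumes "m \<le> x" "x \<le> n" "height m n (cut l \<tau>) x < x"
  shows "\<exists>y\<in>{m..x}. \<tau> y \<le> l"
proof (rule ccontr)
  assume "\<not> (\<exists>y\<in>{m..x}. \<tau> y \<le> l)"
  then have "(\<Sum>y\<in>{m..x}. 1 - 2 * (if y > n then 1 else cut l \<tau> y)) = (\<Sum>y\<in>{m..x}. 1)"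
    using assms(2) by (intro sum.cong refl) (auto simp: cut_def)
  then show False
    using assms by (simp add: height_def)
qed

lemma card_le_permutes:
  assumes "\<tau> permutes {m..n}" "m - 1 \<le> k" "k \<le> n"
  shows "int (card {y\<in>{m..n}. \<tau> y \<le> k}) = k - m + 1"
proof -
  have "\<tau> ` {y\<in>{m..n}. \<tau> y \<le> k} = {m..k}"
  proof
    show "\<tau> ` {y\<in>{m..n}. \<tau> y \<le> k} \<subseteq> {m..k}"
      using permutes_in_image[OF assms(1)] by fastforce
    show "{m..k} \<subseteq> \<tau> ` {y\<in>{m..n}. \<tau> y \<le> k}"
    proof
      fix v
      assume "v \<in> {m..k}"
      moreover have "v = \<tau> (inv \<tau> v)"
        using permutes_inverses(1)[OF assms(1)] by simp
      ultimately show "v \<in> \<tau> ` {y\<in>{m..n}. \<tau> y \<le> k}"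
        using permutes_in_image[OF assms(1), of "inv \<tau> v"] assms(3) by force
    qed
  qed
  then have "card {y\<in>{m..n}. \<tau> y \<le> k} = card {m..k}"
    using card_image[OF inj_on_subset[OF permutes_inj[OF assms(1)]]] by (metis subset_UNIV)
  then show ?thesis
    using assms(2) by simp
qed

section \<open>The ASEP law is Mallows on the fibers of the merging map\<close>

locale asep_split = asep +
  fixes k :: int
  assumes k_nonneg: "0 \<le> k" and k_le_X: "k \<le> X"
begin

lemma low_weight_nonneg: "0 \<le> low_weight q X k \<tau>"
  using q_nonneg by (simp add: low_weight_def)

text \<open>Conditionally on the merged configuration, the species \<open>\<le> k\<close> are Mallows distributed.\<close>
definition mallows_on_fibers :: "((int \<Rightarrow> int) \<Rightarrow> real) \<Rightarrow> bool" where
  "mallows_on_fibers v \<longleftrightarrow> (\<exists>f. \<forall>\<tau>\<in>S. v \<tau> = f (merge_low X k \<tau>) * low_weight q X k \<tau>)"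

lemma jump_balance_low:
  assumes "\<tau> \<in> S" "- X \<le> x" "x < X" "\<tau> x \<le> k" "\<tau> (x + 1) \<le> k"
    and v: "\<forall>\<tau>\<in>S. v \<tau> = f (merge_low X k \<tau>) * low_weight q X k \<tau>"
  shows "v (swap_at \<tau> x) * jump_rate q (swap_at \<tau> x) x = v \<tau> * jump_rate q \<tau> x"
proof -
  have "swap_at \<tau> x \<in> S"
    using assms(1-3) by (rule swap_at_in_perms_on)
  moreover have "\<tau> x \<noteq> \<tau> (x + 1)"
    using permutes_inj[of \<tau> "{-X..X}"] assms(1) by (auto simp: perms_on_iff_permutes dest: injD)
  ultimately show ?thesis
    using v assms low_weight_swap_at_balance[of X x \<tau> k q] merge_low_swap_at_low[of \<tau> x k X]
    by (simp add: mult.assoc)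
qed

lemma jump_balance_not_low:
  assumes "\<tau> \<in> S" "- X \<le> x" "x < X" "\<not> (\<tau> x \<le> k \<and> \<tau> (x + 1) \<le> k)"
    and v: "\<forall>\<tau>\<in>S. v \<tau> = f (merge_low X k \<tau>) * low_weight q X k \<tau>"
  shows "v (swap_at \<tau> x) * jump_rate q (swap_at \<tau> x) x - v \<tau> * jump_rate q \<tau> x =
    (f (swap_at (merge_low X k \<tau>) x) * jump_rate q (swap_at (merge_low X k \<tau>) x) x
      - f (merge_low X k \<tau>) * jump_rate q (merge_low X k \<tau>) x) * low_weight q X k \<tau>"
proof -
  have k: "- X - 1 \<le> k"
    using k_nonneg k_le_X by simp
  have "swap_at \<tau> x \<in> S"
    using assms(1-3) by (rule swap_at_in_perms_on)
  then have "v (swap_at \<tau> x) = f (swap_at (merge_low X k \<tau>) x) * low_weight q X k \<tau>"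
    using v card_low_ascents_swap_at[OF assms(2-4)] by (simp add: merge_low_swap_at low_weight_def)
  moreover have "jump_rate q (swap_at \<tau> x) x = jump_rate q (swap_at (merge_low X k \<tau>) x) x"
  proof -
    have "\<not> (swap_at \<tau> x x \<le> k \<and> swap_at \<tau> x (x + 1) \<le> k)"
      using assms(4) by (auto simp: swap_at_def)
    then have "jump_rate q (merge_low X k (swap_at \<tau> x)) x = jump_rate q (swap_at \<tau> x) x"
      by (rule jump_rate_merge_low[OF k])
    then show ?thesis
      by (simp only: merge_low_swap_at)
  qed
  moreover have "jump_rate q \<tau> x = jump_rate q (merge_low X k \<tau>) x"
    using jump_rate_merge_low[OF k assms(4)] by simp
  ultimately show ?thesis
    using v assms(1) by (simp add: algebra_simps)
qed

lemma mallows_on_fibers_gen: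
  assumes "mallows_on_fibers v"
  shows "mallows_on_fibers (\<lambda>\<tau>. \<Sum>\<rho>\<in>S. v \<rho> * asep_gen q X \<rho> \<tau>)"
proof -
  obtain f where v: "\<forall>\<tau>\<in>S. v \<tau> = f (merge_low X k \<tau>) * low_weight q X k \<tau>"
    using assms by (auto simp: mallows_on_fibers_def)
  define g where "g \<rho> = (\<Sum>x\<in>{-X..<X}. if \<rho> x = - X - 1 \<and> \<rho> (x + 1) = - X - 1 then 0
      else f (swap_at \<rho> x) * jump_rate q (swap_at \<rho> x) x - f \<rho> * jump_rate q \<rho> x)" for \<rho>
  have "(\<Sum>\<rho>\<in>S. v \<rho> * asep_gen q X \<rho> \<tau>) = g (merge_low X k \<tau>) * low_weight q X k \<tau>"
    if "\<tau> \<in> S" for \<tau>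
    unfolding asep_gen_left_action[OF that] g_def sum_distrib_right
  proof (intro sum.cong refl)
    fix x
    assume "x \<in> {-X..<X}"
    then have x: "- X \<le> x" "x < X"
      by auto
    have "merge_low X k \<tau> y = - X - 1 \<longleftrightarrow> \<tau> y \<le> k" for y
      using k_nonneg k_le_X by (intro merge_low_eq_iff) simp
    then show "v (swap_at \<tau> x) * jump_rate q (swap_at \<tau> x) x - v \<tau> * jump_rate q \<tau> x =
      (if merge_low X k \<tau> x = - X - 1 \<and> merge_low X k \<tau> (x + 1) = - X - 1 then 0
       else f (swap_at (merge_low X k \<tau>) x) * jump_rate q (swap_at (merge_low X k \<tau>) x) x
         - f (merge_low X k \<tau>) * jump_rate q (merge_low X k \<tau>) x) * low_weight q X k \<tau>"
      using jump_balance_low[OF that x _ _ v] jump_balance_not_low[OF that x _ v] by auto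
  qed
  then show ?thesis
    unfolding mallows_on_fibers_def by blast
qed

lemma perms_on_low_iff:
  assumes "\<tau> \<in> S"
  shows "\<tau> \<in> perms_on (-X) k \<longleftrightarrow> (\<forall>x\<in>{k+1..X}. merge_low X k \<tau> x = x)"
proof -
  have "merge_low X k \<tau> x = x \<longleftrightarrow> \<tau> x = x" if "x \<in> {k+1..X}" for x
    using that k_nonneg by (auto simp: merge_low_def)
  moreover have "\<tau> permutes {-X..k} \<longleftrightarrow> (\<forall>x\<in>{k+1..X}. \<tau> x = x)"
  proof
    assume "\<tau> permutes {-X..k}"
    then show "\<forall>x\<in>{k+1..X}. \<tau> x = x"
      by (simp add: permutes_not_in)
  next
    assume fixed: "\<forall>x\<in>{k+1..X}. \<tau> x = x"
    have "\<tau> permutes {-X..X}"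
      using assms by (simp add: perms_on_iff_permutes)
    then show "\<tau> permutes {-X..k}"
      by (rule permutes_superset) (use fixed in auto)
  qed
  ultimately show ?thesis
    by (simp add: perms_on_iff_permutes)
qed

lemma mallows_weight_eq_low_weight:
  assumes "\<tau> \<in> perms_on (-X) k"
  shows "mallows_weight q (-X) k \<tau> = low_weight q X k \<tau>"
proof -
  have perm: "\<tau> permutes {-X..k}"
    using assms by (simp add: perms_on_iff_permutes)
  have "(- X \<le> i \<and> i < j \<and> j \<le> k \<and> \<tau> i < \<tau> j) \<longleftrightarrow>
      (- X \<le> i \<and> i < j \<and> j \<le> X \<and> \<tau> i < \<tau> j \<and> \<tau> j \<le> k)" for i j
  proof (cases "- X \<le> i \<and> i < j")
    case True
    have "j \<le> k \<longleftrightarrow> \<tau> j \<le> k \<and> j \<le> X"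
    proof
      assume "j \<le> k"
      then have "\<tau> j \<in> {-X..k}"
        using True permutes_in_image[OF perm, of j] by simp
      then show "\<tau> j \<le> k \<and> j \<le> X"
        using \<open>j \<le> k\<close> k_le_X by simp
    next
      assume "\<tau> j \<le> k \<and> j \<le> X"
      then show "j \<le> k"
        using True permutes_not_in[OF perm, of j] by (cases "j \<le> k") auto
    qed
    then show ?thesis
      by auto
  qed auto
  then have "{(i, j). - X \<le> i \<and> i < j \<and> j \<le> k \<and> \<tau> i < \<tau> j} = low_ascents X k \<tau>"
    unfolding low_ascents_def by (simp only:)
  then show ?thesis
    by (simp add: mallows_weight_def low_weight_def)
qed

lemma mallows_on_fibers_mallows: "mallows_on_fibers (mallows q (-X) k)"
proof -
  define Z where "Z = (\<Sum>\<sigma>\<in>perms_on (-X) k. mallows_weight q (-X) k \<sigma>)"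
  define f where "f \<rho> = (if \<forall>x\<in>{k+1..X}. \<rho> x = x then 1 / Z else 0)" for \<rho> :: "int \<Rightarrow> int"
  have "mallows q (-X) k \<tau> = f (merge_low X k \<tau>) * low_weight q X k \<tau>"
    if "\<tau> \<in> S" for \<tau>
  proof (cases "\<tau> \<in> perms_on (-X) k")
    case True
    then show ?thesis
      using perms_on_low_iff[OF that] mallows_weight_eq_low_weight[OF True]
      unfolding mallows_def Z_def [symmetric] f_def by simp
  next
    case False
    then have "\<not> (\<forall>x\<in>{k+1..X}. merge_low X k \<tau> x = x)"
      using perms_on_low_iff[OF that] by blast
    then have "f (merge_low X k \<tau>) = 0"
      unfolding f_def by (rule if_not_P)
    moreover have "mallows q (-X) k \<tau> = 0"
      using False by (simp add: mallows_def)
    ultimately show ?thesis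
      by simp
  qed
  then show ?thesis
    unfolding mallows_on_fibers_def by blast
qed

lemma mallows_nonneg: "0 \<le> mallows q (-X) k \<sigma>"
  unfolding mallows_def mallows_weight_def using q_nonneg
  by (auto intro!: divide_nonneg_nonneg sum_nonneg)

lemma sum_mallows_le_1: "(\<Sum>\<sigma>\<in>S. mallows q (-X) k \<sigma>) \<le> 1"
proof -
  define Z where "Z = (\<Sum>\<sigma>\<in>perms_on (-X) k. mallows_weight q (-X) k \<sigma>)"
  have "perms_on (-X) k \<subseteq> S"
    using k_le_X by (auto simp: perms_on_iff_permutes intro!: permutes_subset[where S = "{-X..k}"])
  then have "(\<Sum>\<sigma>\<in>S. mallows q (-X) k \<sigma>) = (\<Sum>\<sigma>\<in>perms_on (-X) k. mallows q (-X) k \<sigma>)"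
    using finite_perms_on by (intro sum.mono_neutral_right) (auto simp: mallows_def)
  also have "\<dots> = (\<Sum>\<sigma>\<in>perms_on (-X) k. mallows_weight q (-X) k \<sigma> / Z)"
    by (intro sum.cong refl) (simp add: mallows_def Z_def)
  also have "\<dots> = Z / Z"
    unfolding Z_def by (rule sum_divide_distrib [symmetric])
  also have "\<dots> \<le> 1"
    by (simp add: divide_le_eq_1)
  finally show ?thesis .
qed

definition asep_law :: "real \<Rightarrow> (int \<Rightarrow> int) \<Rightarrow> real" where
  "asep_law t \<tau> = (\<Sum>\<sigma>\<in>S. mallows q (-X) k \<sigma> * asep_trans q X t \<sigma> \<tau>)"

lemma asep_prob_dot_eq_sum_asep_law: "asep_prob_dot q X k t E = (\<Sum>\<tau>\<in>{\<tau>\<in>S. E \<tau>}. asep_law t \<tau>)"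
  unfolding asep_prob_dot_def asep_law_def by (rule sum.swap)

lemma asep_law_nonneg: "0 \<le> t \<Longrightarrow> \<tau> \<in> S \<Longrightarrow> 0 \<le> asep_law t \<tau>"
  unfolding asep_law_def by (intro sum_nonneg mult_nonneg_nonneg mallows_nonneg asep_trans_nonneg)

lemma sum_asep_law_le_1: "(\<Sum>\<tau>\<in>S. asep_law t \<tau>) \<le> 1"
proof -
  have "(\<Sum>\<tau>\<in>S. asep_law t \<tau>) = (\<Sum>\<sigma>\<in>S. mallows q (-X) k \<sigma> * (\<Sum>\<tau>\<in>S. asep_trans q X t \<sigma> \<tau>))"
    unfolding asep_law_def sum_distrib_left by (rule sum.swap)
  also have "\<dots> = (\<Sum>\<sigma>\<in>S. mallows q (-X) k \<sigma>)"
    by (simp add: asep_trans_row_sum)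
  finally show ?thesis
    using sum_mallows_le_1 by simp
qed

lemma mallows_on_fibers_asep_law: "mallows_on_fibers (asep_law t)"
proof -
  have "mallows_on_fibers (\<lambda>\<tau>. \<Sum>\<sigma>\<in>S. mallows q (-X) k \<sigma> * mat_pow S (asep_gen q X) n \<sigma> \<tau>)" for n
  proof (induction n)
    case 0
    have "(\<Sum>\<sigma>\<in>S. mallows q (-X) k \<sigma> * mat_pow S (asep_gen q X) 0 \<sigma> \<tau>) = mallows q (-X) k \<tau>"
      if "\<tau> \<in> S" for \<tau>
      using that finite_perms_on by (simp add: if_distrib sum.delta' cong: if_cong)
    then show ?case
      using mallows_on_fibers_mallows by (simp add: mallows_on_fibers_def)
  next
    case (Suc n)
    then show ?case
      unfolding sum_mult_mat_pow_Suc by (rule mallows_on_fibers_gen)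
  qed
  then obtain f where f: "\<And>n. \<forall>\<tau>\<in>S. (\<Sum>\<sigma>\<in>S. mallows q (-X) k \<sigma> * mat_pow S (asep_gen q X) n \<sigma> \<tau>) =
      f n (merge_low X k \<tau>) * low_weight q X k \<tau>"
    unfolding mallows_on_fibers_def by metis
  define F where "F r = (\<Sum>n. t ^ n / fact n * f n r)" for r
  have "asep_law t \<tau> = F (merge_low X k \<tau>) * low_weight q X k \<tau>"
    if "\<tau> \<in> S" for \<tau>
  proof -
    let ?w = "low_weight q X k \<tau>"
    have sums: "(\<lambda>n. t ^ n / fact n * f n (merge_low X k \<tau>) * ?w) sums asep_law t \<tau>"
      using sums_sum_mult_mat_exp[OF finite_perms_on that, of t "mallows q (-X) k" "asep_gen q X"] f that
      by (simp add: asep_law_def asep_trans_eq_mat_exp mult.assoc)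
    show ?thesis
    proof (cases "?w = 0")
      case True
      then show ?thesis
        using sums by (simp add: sums_iff)
    next
      case False
      then have "(\<lambda>n. t ^ n / fact n * f n (merge_low X k \<tau>)) sums (asep_law t \<tau> / ?w)"
        using sums_divide[OF sums, of ?w] by simp
      then show ?thesis
        using False by (simp add: F_def sums_iff)
    qed
  qed
  then show ?thesis
    unfolding mallows_on_fibers_def by blast
qed

definition fiber :: "(int \<Rightarrow> int) \<Rightarrow> (int \<Rightarrow> int) set" where
  "fiber r = {\<tau>\<in>S. merge_low X k \<tau> = r}"

lemma finite_fiber: "finite (fiber r)"
  unfolding fiber_def using finite_perms_on by simp

lemma mallows_on_fibers_event_le:
  assumes "mallows_on_fibers \<nu>" and nonneg: "\<And>\<tau>. \<tau> \<in> S \<Longrightarrow> 0 \<le> \<nu> \<tau>" and "0 \<le> c"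
    and fibers: "\<And>r. (\<Sum>\<tau>\<in>{\<tau>\<in>fiber r. E \<tau>}. low_weight q X k \<tau>) \<le> c * (\<Sum>\<tau>\<in>fiber r. low_weight q X k \<tau>)"
  shows "(\<Sum>\<tau>\<in>{\<tau>\<in>S. E \<tau>}. \<nu> \<tau>) \<le> c * (\<Sum>\<tau>\<in>S. \<nu> \<tau>)"
proof -
  obtain f where f: "\<forall>\<tau>\<in>S. \<nu> \<tau> = f (merge_low X k \<tau>) * low_weight q X k \<tau>"
    using assms(1) by (auto simp: mallows_on_fibers_def)
  have fiber_le: "(\<Sum>\<tau>\<in>{\<tau>\<in>fiber r. E \<tau>}. \<nu> \<tau>) \<le> c * (\<Sum>\<tau>\<in>fiber r. \<nu> \<tau>)" for r
  proof (cases "0 \<le> f r")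
    case True
    have "(\<Sum>\<tau>\<in>{\<tau>\<in>fiber r. E \<tau>}. \<nu> \<tau>) = f r * (\<Sum>\<tau>\<in>{\<tau>\<in>fiber r. E \<tau>}. low_weight q X k \<tau>)"
      using f by (simp add: fiber_def sum_distrib_left)
    also have "\<dots> \<le> f r * (c * (\<Sum>\<tau>\<in>fiber r. low_weight q X k \<tau>))"
      using fibers True by (rule mult_left_mono)
    also have "\<dots> = c * (\<Sum>\<tau>\<in>fiber r. \<nu> \<tau>)"
      using f by (simp add: fiber_def sum_distrib_left mult_ac)
    finally show ?thesis .
  next
    case False
    have "\<nu> \<tau> = 0" if "\<tau> \<in> fiber r" for \<tau>
    proof -
      have \<nu>: "\<nu> \<tau> = f r * low_weight q X k \<tau>"
        using f that by (simp add: fiber_def)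
      moreover have "0 \<le> \<nu> \<tau>"
        using nonneg that by (simp add: fiber_def)
      ultimately have "low_weight q X k \<tau> \<le> 0"
        using False by (simp add: zero_le_mult_iff)
      then show ?thesis
        using \<nu> low_weight_nonneg[of \<tau>] by simp
    qed
    then show ?thesis
      by simp
  qed
  have "(\<Sum>\<tau>\<in>{\<tau>\<in>S. E \<tau>}. \<nu> \<tau>) = (\<Sum>r\<in>merge_low X k ` S. \<Sum>\<tau>\<in>{\<tau>\<in>fiber r. E \<tau>}. \<nu> \<tau>)"
    using finite_perms_on by (subst sum.group [symmetric, of _ "merge_low X k ` S" "merge_low X k"])
      (auto simp: fiber_def intro!: sum.cong arg_cong[where f = "sum \<nu>"])
  also have "\<dots> \<le> (\<Sum>r\<in>merge_low X k ` S. c * (\<Sum>\<tau>\<in>fiber r. \<nu> \<tau>))"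
    by (intro sum_mono fiber_le)
  also have "\<dots> = c * (\<Sum>\<tau>\<in>S. \<nu> \<tau>)"
    unfolding sum_distrib_left [symmetric] fiber_def
    using finite_perms_on by (subst sum.group) auto
  finally show ?thesis .
qed

lemma asep_prob_dot_le:
  assumes "0 \<le> t" and "0 \<le> c"
    and "\<And>r. (\<Sum>\<tau>\<in>{\<tau>\<in>fiber r. E \<tau>}. low_weight q X k \<tau>) \<le> c * (\<Sum>\<tau>\<in>fiber r. low_weight q X k \<tau>)"
  shows "asep_prob_dot q X k t E \<le> c"
proof -
  have "asep_prob_dot q X k t E \<le> c * (\<Sum>\<tau>\<in>S. asep_law t \<tau>)"
    unfolding asep_prob_dot_eq_sum_asep_law
    using mallows_on_fibers_asep_law asep_law_nonneg[OF assms(1)] assms(2,3)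
    by (rule mallows_on_fibers_event_le)
  also have "\<dots> \<le> c"
    using mult_left_mono[OF sum_asep_law_le_1 assms(2)] by simp
  finally show ?thesis .
qed

section \<open>Tail bounds inside a fiber\<close>

definition ascent_partners :: "(int \<Rightarrow> int) \<Rightarrow> int \<Rightarrow> int set" where
  "ascent_partners \<tau> l = {j. inv \<tau> l < j \<and> j \<le> X \<and> l < \<tau> j \<and> \<tau> j \<le> k}"

definition drop_ascent :: "(int \<Rightarrow> int) \<Rightarrow> int \<Rightarrow> int \<Rightarrow> int" where
  "drop_ascent \<tau> l = \<tau> \<circ> transpose (inv \<tau> l) (Min (ascent_partners \<tau> l))"

lemma finite_ascent_partners: "finite (ascent_partners \<tau> l)"
  unfolding ascent_partners_def by (rule finite_subset[of _ "{inv \<tau> l..X}"]) auto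

lemma perms_on_inverses:
  assumes "\<tau> \<in> S"
  shows "\<tau> (inv \<tau> l) = l" "inv \<tau> (\<tau> x) = x"
  using assms by (simp_all add: perms_on_iff_permutes permutes_inverses)

lemma first_ascent_partner:
  assumes "\<tau> \<in> S" "l \<in> {-X..k}" "ascent_partners \<tau> l \<noteq> {}"
  defines "p \<equiv> inv \<tau> l" and "s \<equiv> Min (ascent_partners \<tau> l)"
  shows "\<tau> p = l" "- X \<le> p" "p < s" "s \<le> X" "l < \<tau> s" "\<tau> s \<le> k"
    and "\<And>z. p < z \<Longrightarrow> z < s \<Longrightarrow> \<not> (l < \<tau> z \<and> \<tau> z \<le> k)"
proof -
  show p: "\<tau> p = l"
    unfolding p_def using assms(1) by (rule perms_on_inverses)
  have "s \<in> ascent_partners \<tau> l"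
    unfolding s_def using finite_ascent_partners assms(3) by (rule Min_in)
  then show "p < s" "s \<le> X" "l < \<tau> s" "\<tau> s \<le> k"
    unfolding ascent_partners_def p_def by auto
  show "- X \<le> p"
  proof (rule ccontr)
    assume "\<not> - X \<le> p"
    then have "\<tau> p = p"
      using assms(1) by (simp add: perms_on_iff_permutes permutes_not_in)
    then show False
      using p assms(2) \<open>\<not> - X \<le> p\<close> by simp
  qed
  show "\<not> (l < \<tau> z \<and> \<tau> z \<le> k)" if "p < z" "z < s" for z
  proof
    assume "l < \<tau> z \<and> \<tau> z \<le> k"
    then have "z \<in> ascent_partners \<tau> l"
      using that \<open>s \<le> X\<close> by (auto simp: ascent_partners_def p_def)
    then have "s \<le> z"
      unfolding s_def by (rule Min_le[OF finite_ascent_partners])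
    then show False
      using that by simp
  qed
qed

lemma ascent_partners_drop_ascent:
  assumes "\<tau> \<in> S" "l \<in> {-X..k}" "ascent_partners \<tau> l \<noteq> {}"
  defines "s \<equiv> Min (ascent_partners \<tau> l)"
  shows "ascent_partners \<tau> l = insert s (ascent_partners (drop_ascent \<tau> l) l)"
    and "s \<notin> ascent_partners (drop_ascent \<tau> l) l"
proof -
  define p where "p = inv \<tau> l"
  note first = first_ascent_partner[OF assms(1-3), folded p_def s_def]
  have drop: "drop_ascent \<tau> l = \<tau> \<circ> transpose p s"
    by (simp add: drop_ascent_def p_def s_def)
  have "drop_ascent \<tau> l \<in> S"
    unfolding drop using assms(1) first(2-4)
    by (simp add: perms_on_iff_permutes permutes_compose permutes_swap_id)
  moreover have "drop_ascent \<tau> l s = l"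
    using first(1) by (simp add: drop)
  ultimately have "inv (drop_ascent \<tau> l) l = s"
    using perms_on_inverses(2) by metis
  moreover have "drop_ascent \<tau> l j = \<tau> j" if "s < j" for j
    using that first(3) by (simp add: drop transpose_def)
  ultimately have partners: "ascent_partners (drop_ascent \<tau> l) l = {j. s < j \<and> j \<le> X \<and> l < \<tau> j \<and> \<tau> j \<le> k}"
    unfolding ascent_partners_def by auto
  then show "s \<notin> ascent_partners (drop_ascent \<tau> l) l"
    by simp
  have "s \<in> ascent_partners \<tau> l"
    unfolding s_def using finite_ascent_partners assms(3) by (rule Min_in)
  have "ascent_partners \<tau> l = insert s {j. s < j \<and> j \<le> X \<and> l < \<tau> j \<and> \<tau> j \<le> k}"
  proof (intro set_eqI iffI)
    fix j
    assume j: "j \<in> ascent_partners \<tau> l"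
    then have "s \<le> j"
      unfolding s_def by (rule Min_le[OF finite_ascent_partners])
    then show "j \<in> insert s {j. s < j \<and> j \<le> X \<and> l < \<tau> j \<and> \<tau> j \<le> k}"
      using j by (auto simp: ascent_partners_def)
  next
    fix j
    assume "j \<in> insert s {j. s < j \<and> j \<le> X \<and> l < \<tau> j \<and> \<tau> j \<le> k}"
    then show "j \<in> ascent_partners \<tau> l"
      using \<open>s \<in> ascent_partners \<tau> l\<close> first(3) by (auto simp: ascent_partners_def p_def)
  qed
  then show "ascent_partners \<tau> l = insert s (ascent_partners (drop_ascent \<tau> l) l)"
    unfolding partners .
qed

lemma drop_ascent:
  assumes "\<tau> \<in> fiber r" "l \<in> {-X..k}" "ascent_partners \<tau> l \<noteq> {}"
  shows "drop_ascent \<tau> l \<in> fiber r"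
    and "low_weight q X k \<tau> = q * low_weight q X k (drop_ascent \<tau> l)"
    and "card (ascent_partners \<tau> l) = Suc (card (ascent_partners (drop_ascent \<tau> l) l))"
proof -
  have \<tau>: "\<tau> \<in> S" "merge_low X k \<tau> = r"
    using assms(1) by (auto simp: fiber_def)
  define p where "p = inv \<tau> l"
  define s where "s = Min (ascent_partners \<tau> l)"
  note first = first_ascent_partner[OF \<tau>(1) assms(2,3), folded p_def s_def]
  have drop: "drop_ascent \<tau> l = \<tau> \<circ> transpose p s"
    by (simp add: drop_ascent_def p_def s_def)
  have "drop_ascent \<tau> l \<in> S"
    unfolding drop using \<tau>(1) first(2-4)
    by (simp add: perms_on_iff_permutes permutes_compose permutes_swap_id)
  moreover have "merge_low X k (drop_ascent \<tau> l) = merge_low X k \<tau>"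
    unfolding drop by (rule ext) (use first(1,6) assms(2) in \<open>auto simp: merge_low_def transpose_def\<close>)
  ultimately show "drop_ascent \<tau> l \<in> fiber r"
    using \<tau>(2) by (simp add: fiber_def)
  have between: "(\<tau> z < \<tau> p \<and> \<tau> z < \<tau> s \<and> \<tau> p \<le> k \<and> \<tau> s \<le> k) \<or> (\<tau> p < \<tau> z \<and> \<tau> s < \<tau> z)"
    if "p < z" "z < s" for z
  proof -
    have "\<tau> z \<noteq> l"
      using first(1) that \<tau>(1) permutes_inj[of \<tau> "{-X..X}"]
      by (auto simp: perms_on_iff_permutes dest: injD)
    then show ?thesis
      using first(1,5,6) first(7)[OF that] assms(2) by auto
  qed
  have "card (low_ascents X k (\<tau> \<circ> transpose p s) - {(p, s)}) = card (low_ascents X k \<tau> - {(p, s)})"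
    by (rule card_low_ascents_transpose) (use first(2-4) between in auto)
  moreover have "card (low_ascents X k \<tau>) = card (low_ascents X k \<tau> - {(p, s)}) + 1"
    using card_low_ascents_remove[of X k \<tau> p s] first assms(2) by auto
  moreover have "card (low_ascents X k (\<tau> \<circ> transpose p s)) = card (low_ascents X k (\<tau> \<circ> transpose p s) - {(p, s)})"
    using card_low_ascents_remove[of X k "\<tau> \<circ> transpose p s" p s] first by auto
  ultimately show "low_weight q X k \<tau> = q * low_weight q X k (drop_ascent \<tau> l)"
    by (simp add: drop low_weight_def)
  note partners = ascent_partners_drop_ascent[OF \<tau>(1) assms(2,3)]
  have "card (ascent_partners \<tau> l) =
      card (insert (Min (ascent_partners \<tau> l)) (ascent_partners (drop_ascent \<tau> l) l))"
    using partners(1) by (rule arg_cong)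
  also have "\<dots> = Suc (card (ascent_partners (drop_ascent \<tau> l) l))"
    using partners(2) by (rule card_insert_disjoint[OF finite_ascent_partners])
  finally show "card (ascent_partners \<tau> l) = Suc (card (ascent_partners (drop_ascent \<tau> l) l))" .
qed

lemma drop_ascent_apply:
  assumes "\<tau> \<in> S" "l \<in> {-X..k}" "ascent_partners \<tau> l \<noteq> {}"
  defines "p \<equiv> inv \<tau> l" and "s \<equiv> Min (ascent_partners \<tau> l)"
  shows "drop_ascent \<tau> l s = l" "l < drop_ascent \<tau> l p" "drop_ascent \<tau> l p \<le> k"
    and "\<And>y. y < s \<Longrightarrow> l < drop_ascent \<tau> l y \<Longrightarrow> drop_ascent \<tau> l y \<le> k \<Longrightarrow> y \<le> p"
proof -
  note first = first_ascent_partner[OF assms(1-3), folded p_def s_def]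
  have drop: "drop_ascent \<tau> l = \<tau> \<circ> transpose p s"
    by (simp add: drop_ascent_def p_def s_def)
  show "drop_ascent \<tau> l s = l" "l < drop_ascent \<tau> l p" "drop_ascent \<tau> l p \<le> k"
    using first(1,5,6) by (simp_all add: drop)
  show "y \<le> p" if y: "y < s" "l < drop_ascent \<tau> l y" "drop_ascent \<tau> l y \<le> k" for y
  proof (rule ccontr)
    assume "\<not> y \<le> p"
    then have "drop_ascent \<tau> l y = \<tau> y"
      using y(1) by (simp add: drop transpose_def)
    then show False
      using first(7)[of y] y \<open>\<not> y \<le> p\<close> by simp
  qed
qed

lemma inj_on_drop_ascent:
  assumes "l \<in> {-X..k}"
  shows "inj_on (\<lambda>\<tau>. drop_ascent \<tau> l) {\<tau>\<in>S. ascent_partners \<tau> l \<noteq> {}}"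
proof (rule inj_onI)
  fix \<tau>1 \<tau>2
  assume "\<tau>1 \<in> {\<tau>\<in>S. ascent_partners \<tau> l \<noteq> {}}" and "\<tau>2 \<in> {\<tau>\<in>S. ascent_partners \<tau> l \<noteq> {}}"
  then have \<tau>1: "\<tau>1 \<in> S" "ascent_partners \<tau>1 l \<noteq> {}" and \<tau>2: "\<tau>2 \<in> S" "ascent_partners \<tau>2 l \<noteq> {}"
    by auto
  assume eq: "drop_ascent \<tau>1 l = drop_ascent \<tau>2 l"
  define \<sigma> where "\<sigma> = drop_ascent \<tau>1 l"
  define p1 where "p1 = inv \<tau>1 l"
  define s1 where "s1 = Min (ascent_partners \<tau>1 l)"
  define p2 where "p2 = inv \<tau>2 l"
  define s2 where "s2 = Min (ascent_partners \<tau>2 l)"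
  note d1 = drop_ascent_apply[OF \<tau>1(1) assms \<tau>1(2), folded p1_def s1_def \<sigma>_def]
  note d2 = drop_ascent_apply[OF \<tau>2(1) assms \<tau>2(2), folded p2_def s2_def eq, folded \<sigma>_def]
  have \<tau>1_eq: "\<tau>1 = \<sigma> \<circ> transpose p1 s1"
    unfolding \<sigma>_def by (simp add: drop_ascent_def p1_def s1_def comp_assoc)
  have \<tau>2_eq: "\<tau>2 = \<sigma> \<circ> transpose p2 s2"
    unfolding \<sigma>_def eq by (simp add: drop_ascent_def p2_def s2_def comp_assoc)
  have "p1 < s1" "p2 < s2"
    using first_ascent_partner(3) \<tau>1 \<tau>2 assms by (simp_all add: p1_def s1_def p2_def s2_def)
  have "\<sigma> \<in> S"
    unfolding \<sigma>_def drop_ascent_def using \<tau>1 first_ascent_partner(2-4)[OF \<tau>1(1) assms \<tau>1(2)]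
    by (simp add: perms_on_iff_permutes permutes_compose permutes_swap_id)
  then have "inj \<sigma>"
    by (simp add: perms_on_iff_permutes permutes_inj)
  then have "s1 = s2"
    using d1(1) d2(1) by (metis injD)
  moreover have "p1 = p2"
    using d1(4)[of p2] d2(4)[of p1] d1(2,3) d2(2,3) \<open>p1 < s1\<close> \<open>p2 < s2\<close> \<open>s1 = s2\<close>
    by (intro order.antisym) simp_all
  ultimately show "\<tau>1 = \<tau>2"
    using \<tau>1_eq \<tau>2_eq by simp
qed

lemma fiber_weight_many_ascents_le:
  assumes "l \<in> {-X..k}"
  shows "(\<Sum>\<tau>\<in>{\<tau>\<in>fiber r. j \<le> card (ascent_partners \<tau> l)}. low_weight q X k \<tau>) \<le>
    q ^ j * (\<Sum>\<tau>\<in>fiber r. low_weight q X k \<tau>)"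
proof (induction j)
  case 0
  then show ?case
    by simp
next
  case (Suc j)
  let ?A = "{\<tau>\<in>fiber r. Suc j \<le> card (ascent_partners \<tau> l)}"
  let ?B = "{\<tau>\<in>fiber r. j \<le> card (ascent_partners \<tau> l)}"
  have inj: "inj_on (\<lambda>\<tau>. drop_ascent \<tau> l) ?A"
    by (rule inj_on_subset[OF inj_on_drop_ascent[OF assms]]) (auto simp: fiber_def)
  have "(\<Sum>\<tau>\<in>?A. low_weight q X k \<tau>) = q * (\<Sum>\<tau>\<in>?A. low_weight q X k (drop_ascent \<tau> l))"
    unfolding sum_distrib_left using drop_ascent(2)[OF _ assms] by (intro sum.cong refl) force
  also have "\<dots> = q * (\<Sum>\<tau>\<in>(\<lambda>\<tau>. drop_ascent \<tau> l) ` ?A. low_weight q X k \<tau>)"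
    by (simp add: sum.reindex[OF inj])
  also have "\<dots> \<le> q * (\<Sum>\<tau>\<in>?B. low_weight q X k \<tau>)"
    using drop_ascent(1,3)[OF _ assms] finite_fiber low_weight_nonneg q_nonneg
    by (intro mult_left_mono sum_mono2) force+
  also have "\<dots> \<le> q * (q ^ j * (\<Sum>\<tau>\<in>fiber r. low_weight q X k \<tau>))"
    using Suc.IH q_nonneg by (rule mult_left_mono)
  finally show ?case
    by simp
qed

section \<open>The height event\<close>

lemma card_low_right_of_height':
  assumes "\<tau> \<in> S" "- X \<le> x" "0 \<le> a" "x + a < X"
    and "real_of_int x + b < real_of_int (height' (-X) X (cut k \<tau>) x)"
  shows "real_of_int k + b / 2 - real_of_int a < real (card {y\<in>{x+a<..X}. \<tau> y \<le> k})"
proof -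
  let ?A1 = "{y\<in>{-X..x}. \<tau> y \<le> k}"
  let ?A2 = "{y\<in>{x<..x+a}. \<tau> y \<le> k}"
  let ?A3 = "{y\<in>{x+a<..X}. \<tau> y \<le> k}"
  have "real (card ?A1) < real_of_int X + 1 - b / 2"
    using assms(5) height'_cut[of "-X" x X k \<tau>] assms(2,4,3) by simp
  moreover have "card {y\<in>{-X..X}. \<tau> y \<le> k} = card ?A1 + card ?A2 + card ?A3"
  proof -
    have fin: "finite ?A1" "finite ?A2" "finite ?A3"
      by (rule finite_subset[of _ "{-X..X}"]; use assms(2-4) in auto)+
    have "{y\<in>{-X..X}. \<tau> y \<le> k} = ?A1 \<union> ?A2 \<union> ?A3"
      using assms(2-4) by auto
    moreover have "?A1 \<inter> ?A2 = {}" "(?A1 \<union> ?A2) \<inter> ?A3 = {}"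
      using assms(3) by auto
    ultimately show ?thesis
      using card_Un_disjoint[OF finite_UnI[OF fin(1,2)] fin(3)] card_Un_disjoint[OF fin(1,2)] by simp
  qed
  moreover have "int (card {y\<in>{-X..X}. \<tau> y \<le> k}) = k + X + 1"
    using card_le_permutes[of \<tau> "-X" X k] assms(1) k_nonneg k_le_X by (simp add: perms_on_iff_permutes)
  moreover have "card ?A2 \<le> card {x<..x+a}"
    by (rule card_mono) auto
  then have "card ?A2 \<le> nat a"
    by simp
  ultimately show ?thesis
    using assms(3) by linarith
qed

lemma card_low_right_le_ascent_partners:
  assumes "\<tau> \<in> S" "y \<in> {-X..x}" "x \<le> X"
  shows "card {j\<in>{x<..X}. \<tau> j \<le> k} \<le> card (ascent_partners \<tau> (\<tau> y)) + nat (\<tau> y + X)"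
proof -
  have perm: "\<tau> permutes {-X..X}"
    using assms(1) by (simp add: perms_on_iff_permutes)
  let ?L = "{j\<in>{-X..X}. \<tau> j < \<tau> y}"
  have finite_L: "finite ?L"
    by (rule finite_subset[of _ "{-X..X}"]) auto
  have "{j\<in>{x<..X}. \<tau> j \<le> k} \<subseteq> ascent_partners \<tau> (\<tau> y) \<union> ?L"
  proof
    fix j
    assume j: "j \<in> {j\<in>{x<..X}. \<tau> j \<le> k}"
    then have "j \<noteq> y"
      using assms(2) by auto
    then have "\<tau> j \<noteq> \<tau> y"
      using permutes_inj[OF perm] by (meson injD)
    moreover have "inv \<tau> (\<tau> y) < j"
      using j assms(2) perms_on_inverses(2)[OF assms(1)] by simp
    ultimately show "j \<in> ascent_partners \<tau> (\<tau> y) \<union> ?L"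
      using j assms(2,3) unfolding ascent_partners_def by auto
  qed
  then have "card {j\<in>{x<..X}. \<tau> j \<le> k} \<le> card (ascent_partners \<tau> (\<tau> y) \<union> ?L)"
    by (rule card_mono[OF finite_UnI[OF finite_ascent_partners finite_L]])
  also have "\<dots> \<le> card (ascent_partners \<tau> (\<tau> y)) + card ?L"
    by (rule card_Un_le)
  also have "card ?L \<le> card {-X..\<tau> y - 1}"
  proof (rule card_inj_on_le)
    show "inj_on \<tau> ?L"
      using permutes_inj[OF perm] by (rule inj_on_subset) simp
    show "\<tau> ` ?L \<subseteq> {-X..\<tau> y - 1}"
      using permutes_in_image[OF perm] by fastforce
  qed simp
  finally show ?thesis
    by simp
qed

lemma height_event_ascent_partners:
  assumes "\<tau> \<in> S" "- X \<le> x" "0 \<le> a" "x + a < X"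
    and "height (-X) X (cut (- X + k - 1) \<tau>) (x + a) < x + a"
  shows "\<exists>i<nat k. card {j\<in>{x+a<..X}. \<tau> j \<le> k} - i \<le> card (ascent_partners \<tau> (- X + int i))"
proof -
  obtain y where y: "y \<in> {-X..x+a}" "\<tau> y \<le> - X + k - 1"
    using height_cut_less_imp[OF _ _ assms(5)] assms(2-4) by auto
  have "y \<in> {-X..X}"
    using y(1) assms(4) by simp
  then have "\<tau> y \<in> {-X..X}"
    using permutes_in_image[of \<tau> "{-X..X}" y] assms(1) by (simp add: perms_on_iff_permutes)
  then have "\<tau> y = - X + int (nat (\<tau> y + X))" "nat (\<tau> y + X) < nat k"
    using y(2) by auto
  moreover have "card {j\<in>{x+a<..X}. \<tau> j \<le> k} \<le> card (ascent_partners \<tau> (\<tau> y)) + nat (\<tau> y + X)"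
    using assms(1) y(1) assms(4) by (intro card_low_right_le_ascent_partners) auto
  ultimately show ?thesis
    by (metis le_diff_conv)
qed

lemma fiber_low_positions_eq:
  assumes "\<tau> \<in> fiber r" "\<tau>' \<in> fiber r"
  shows "{j\<in>A. \<tau> j \<le> k} = {j\<in>A. \<tau>' j \<le> k}"
proof -
  have "merge_low X k \<tau> = merge_low X k \<tau>'"
    using assms by (simp add: fiber_def)
  then have "\<tau> j \<le> k \<longleftrightarrow> \<tau>' j \<le> k" for j
    using merge_low_eq_iff[of X k \<tau> j] merge_low_eq_iff[of X k \<tau>' j] k_nonneg k_le_X by simp
  then show ?thesis
    by simp
qed

lemma fiber_weight_ascents_union_le:
  assumes "int K \<le> X + k + 1"
    and cover: "\<And>\<tau>. \<tau> \<in> fiber r \<Longrightarrow> E \<tau> \<Longrightarrow> \<exists>i<K. m - i \<le> card (ascent_partners \<tau> (- X + int i))"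
  shows "(\<Sum>\<tau>\<in>{\<tau>\<in>fiber r. E \<tau>}. low_weight q X k \<tau>) \<le>
    (\<Sum>i<K. q ^ (m - i)) * (\<Sum>\<tau>\<in>fiber r. low_weight q X k \<tau>)"
proof -
  let ?A = "\<lambda>i. {\<tau>\<in>fiber r. m - i \<le> card (ascent_partners \<tau> (- X + int i))}"
  have "(\<Sum>\<tau>\<in>{\<tau>\<in>fiber r. E \<tau>}. low_weight q X k \<tau>) \<le>
      (\<Sum>i<K. \<Sum>\<tau>\<in>{\<tau>\<in>{\<tau>\<in>fiber r. E \<tau>}. m - i \<le> card (ascent_partners \<tau> (- X + int i))}. low_weight q X k \<tau>)"
  proof (rule sum_le_sum_filter_cover)
    fix \<tau>
    assume "\<tau> \<in> {\<tau>\<in>fiber r. E \<tau>}"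
    then show "\<exists>i\<in>{..<K}. m - i \<le> card (ascent_partners \<tau> (- X + int i))"
      using cover unfolding Bex_def lessThan_iff by simp
  qed (use finite_fiber low_weight_nonneg in simp_all)
  also have "\<dots> \<le> (\<Sum>i<K. \<Sum>\<tau>\<in>?A i. low_weight q X k \<tau>)"
    by (intro sum_mono sum_mono2) (use finite_fiber low_weight_nonneg in auto)
  also have "\<dots> \<le> (\<Sum>i<K. q ^ (m - i) * (\<Sum>\<tau>\<in>fiber r. low_weight q X k \<tau>))"
    using assms(1) by (intro sum_mono fiber_weight_many_ascents_le) auto
  finally show ?thesis
    by (simp add: sum_distrib_right)
qed

lemma fiber_height_event_le:
  assumes "q < 1" "- X \<le> x" "0 \<le> a" "x + a < X" "0 < b / 4 - a / 2"
    and E: "\<And>\<tau>. \<tau> \<in> S \<Longrightarrow> E \<tau> \<Longrightarrow>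
      real_of_int x + b < real_of_int (height' (-X) X (cut k \<tau>) x) \<and>
      height (-X) X (cut (- X + k - 1) \<tau>) (x + a) < x + a"
  shows "(\<Sum>\<tau>\<in>{\<tau>\<in>fiber r. E \<tau>}. low_weight q X k \<tau>) \<le>
    q powr (b / 4 - a / 2) / (1 - q) * (\<Sum>\<tau>\<in>fiber r. low_weight q X k \<tau>)"
proof (cases "\<exists>\<tau>\<in>fiber r. E \<tau>")
  case False
  then have "{\<tau>\<in>fiber r. E \<tau>} = {}"
    by auto
  then have "(\<Sum>\<tau>\<in>{\<tau>\<in>fiber r. E \<tau>}. low_weight q X k \<tau>) = 0"
    by (simp only: sum.empty)
  moreover have "0 \<le> q powr (b / 4 - a / 2) / (1 - q) * (\<Sum>\<tau>\<in>fiber r. low_weight q X k \<tau>)"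
    using assms(1) by (intro mult_nonneg_nonneg divide_nonneg_nonneg sum_nonneg low_weight_nonneg) auto
  ultimately show ?thesis
    by simp
next
  case True
  then obtain \<tau>0 where \<tau>0: "\<tau>0 \<in> fiber r" "E \<tau>0"
    by blast
  define m where "m = card {j\<in>{x+a<..X}. \<tau>0 j \<le> k}"
  have "real_of_int k + b / 2 - real_of_int a < real m"
    unfolding m_def using \<tau>0 E assms(2-4) by (intro card_low_right_of_height') (auto simp: fiber_def)
  then have m: "real (nat k) + 2 * (b / 4 - a / 2) < real m"
    using k_nonneg by simp
  have "(\<Sum>\<tau>\<in>{\<tau>\<in>fiber r. E \<tau>}. low_weight q X k \<tau>) \<le>
      (\<Sum>i<nat k. q ^ (m - i)) * (\<Sum>\<tau>\<in>fiber r. low_weight q X k \<tau>)"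
  proof (rule fiber_weight_ascents_union_le)
    show "int (nat k) \<le> X + k + 1"
      using k_nonneg k_le_X by simp
    fix \<tau>
    assume \<tau>: "\<tau> \<in> fiber r" "E \<tau>"
    then have "\<tau> \<in> S"
      by (simp add: fiber_def)
    have "card {j\<in>{x+a<..X}. \<tau> j \<le> k} = m"
      unfolding m_def fiber_low_positions_eq[OF \<tau>(1) \<tau>0(1)] ..
    then show "\<exists>i<nat k. m - i \<le> card (ascent_partners \<tau> (- X + int i))"
      using height_event_ascent_partners[OF \<open>\<tau> \<in> S\<close> assms(2-4)] E[OF \<open>\<tau> \<in> S\<close> \<tau>(2)] by simp
  qed
  also have "\<dots> \<le> q powr (b / 4 - a / 2) / (1 - q) * (\<Sum>\<tau>\<in>fiber r. low_weight q X k \<tau>)"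
    using m assms(1,5) q_nonneg
    by (intro mult_right_mono sum_power_diff_le_powr sum_nonneg low_weight_nonneg) (simp_all add: of_nat_diff)
  finally show ?thesis .
qed

lemma asep_prob_dot_height_event_le:
  assumes "q < 1" "0 \<le> t" "- X \<le> x" "0 \<le> a" "x + a < X" "e = b / 4 - a / 2"
    and E: "\<And>\<tau>. \<tau> \<in> S \<Longrightarrow> E \<tau> \<Longrightarrow>
      real_of_int x + b < real_of_int (height' (-X) X (cut k \<tau>) x) \<and>
      height (-X) X (cut (- X + k - 1) \<tau>) (x + a) < x + a"
  shows "asep_prob_dot q X k t E \<le> (if 0 < e then q powr e / (1 - q) else 1)"
proof (cases "0 < e")
  case True
  then show ?thesis
    using assms(1,6) fiber_height_event_le[OF assms(1,3-5) _ E]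
    by (simp add: asep_prob_dot_le[OF assms(2)])
next
  case False
  have "(\<Sum>\<tau>\<in>{\<tau>\<in>fiber r. E \<tau>}. low_weight q X k \<tau>) \<le> 1 * (\<Sum>\<tau>\<in>fiber r. low_weight q X k \<tau>)" for r
    using finite_fiber low_weight_nonneg by (simp add: sum_mono2)
  then show ?thesis
    using False asep_prob_dot_le[OF assms(2)] by simp
qed

end

theorem lemma3p2:
  fixes q :: real
  assumes "0 \<le> q" and "q < 1"
  shows "\<exists>C>0. \<forall>(N::nat) (k::nat) (a::nat) (b::real). k \<le> N \<longrightarrow>
     (\<exists>X0::nat. \<forall>X\<ge>X0. \<forall>t::real. t \<ge> 0 \<longrightarrow>
       (let P = asep_prob_dot q (int X) (int k) t
              (\<lambda>\<zeta>. real_of_int (height' (- int X) (int X) (cut (int k) \<zeta>) (int N - int k))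
                        > real N - real k + b
                   \<and> height (- int X) (int X) (cut (- int X + int k - 1) \<zeta>) (int N - int k + int a)
                        < int N - int k + int a);
            e = b / 4 - real a / 2
        in (if q = 0 then (e > 0 \<longrightarrow> P \<le> 0) \<and> (e = 0 \<longrightarrow> P \<le> C)
            else P \<le> C * q powr e)))"
  apply (intro exI[of _ "1 / (1 - q)"] conjI allI impI)
  subgoal
    using assms by simp
  subgoal premises kN for N k a b
    apply (intro exI[of _ "N + a + 1"] allI impI)
    subgoal premises Xt for X t
    proof -
      interpret asep_split q "int X" "int k"
        using assms kN Xt by unfold_locales auto
      show ?thesis
        unfolding Let_def
        by (rule powr_bound_cases[OF assms],
            rule asep_prob_dot_height_event_le[where x = "int N - int k" and a = "int a"])
          (use assms kN Xt in auto)
    qed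
    done
  done

end
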